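(* Let $n>2k$, $k\ge t+3$, $t\ge 2$, and let $\mathcal F\subseteq\binom{[n]}{k}$ be a maximal $t$-intersecting family with $\tau_t(\mathcal F)=t+2$ and $\tau_t(\mathcal T_t(\mathcal F))=t+1$. If there exist $U\in\mathcal U_t(\mathcal F)$ and $F\in\mathcal F$ with $|U\cap F|\le t-2$, then $|\mathcal T_t(\mathcal F)|<(t+2)(k-t)+1$.
   Context: A family is $t$-intersecting if any two members meet in at least $t$ elements. A $t$-cover of a family $\mathcal G$ of subsets of $[n]$ is a set $S\subseteq[n]$ with $|S\cap G|\ge t$ for all $G\in\mathcal G$; $\tau_t(\mathcal G)$ is the minimum size of a $t$-cover, and $\mathcal T_t(\mathcal G)$ is the set of all $t$-covers of $\mathcal G$ of size $\tau_t(\mathcal G)$. $\mathcal U_t(\mathcal F)=\mathcal T_t(\mathcal T_t(\mathcal F))$ is the family of all minimum-size $t$-covers of $\mathcal T_t(\mathcal F)$. A $t$-intersecting $\mathcal F\subseteq\binom{[n]}{k}$ is maximal if no $t$-intersecting subfamily of $\binom{[n]}{k}$ properly contains it. *)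

theory Defs
  imports Main
begin

definition t_intersecting :: "nat \<Rightarrow> nat set set \<Rightarrow> bool" where
  "t_intersecting t \<F> \<longleftrightarrow> (\<forall>A\<in>\<F>. \<forall>B\<in>\<F>. card (A \<inter> B) \<ge> t)"

definition k_subsets :: "nat \<Rightarrow> nat \<Rightarrow> nat set set" where
  "k_subsets n k = {A. A \<subseteq> {1..n} \<and> card A = k}"

definition is_t_cover :: "nat \<Rightarrow> nat \<Rightarrow> nat set set \<Rightarrow> nat set \<Rightarrow> bool" where
  "is_t_cover n t \<G> S \<longleftrightarrow> S \<subseteq> {1..n} \<and> (\<forall>G\<in>\<G>. card (S \<inter> G) \<ge> t)"

definition tau_t :: "nat \<Rightarrow> nat \<Rightarrow> nat set set \<Rightarrow> nat" where
  "tau_t n t \<G> = (LEAST m. \<exists>S. is_t_cover n t \<G> S \<and> card S = m)"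

definition T_t :: "nat \<Rightarrow> nat \<Rightarrow> nat set set \<Rightarrow> nat set set" where
  "T_t n t \<G> = {S. is_t_cover n t \<G> S \<and> card S = tau_t n t \<G>}"

definition U_t :: "nat \<Rightarrow> nat \<Rightarrow> nat set set \<Rightarrow> nat set set" where
  "U_t n t \<F> = T_t n t (T_t n t \<F>)"

definition maximal_t_intersecting :: "nat \<Rightarrow> nat \<Rightarrow> nat \<Rightarrow> nat set set \<Rightarrow> bool" where
  "maximal_t_intersecting n k t \<F> \<longleftrightarrow>
     \<F> \<subseteq> k_subsets n k \<and> t_intersecting t \<F> \<and>
     (\<forall>\<G>. \<F> \<subset> \<G> \<and> \<G> \<subseteq> k_subsets n k \<longrightarrow> \<not> t_intersecting t \<G>)"

end

theory Submission
  imports Defs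
begin

text \<open>Every \<open>T \<in> \<T>\<^sub>t(\<F>)\<close> has \<open>t + 2\<close> elements and meets both \<open>U\<close> and \<open>F\<close> in at least
  \<open>t\<close> elements, while \<open>|U \<inter> F| \<le> t - 2\<close>. Counting forces \<open>|U \<inter> F| = t - 2\<close> and
  \<open>T = (U \<inter> F) \<union> p \<union> q\<close> with \<open>p\<close> a 2-subset of the 3-set \<open>U - F\<close> and \<open>q\<close> a 2-subset
  of \<open>F - U\<close>, so \<open>T\<close> is determined by the pair \<open>(p, q)\<close>. Maximality of \<open>\<F>\<close> makes
  \<open>\<T>\<^sub>t(\<F>)\<close> \<open>t\<close>-intersecting, hence members with different \<open>p\<close> have intersecting
  \<open>q\<close>; and \<open>\<tau>\<^sub>t(\<T>\<^sub>t(\<F>)) = t + 1\<close> rules out that all members share the same \<open>p\<close>.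
  Stars and triangles, the only intersecting families of 2-sets, together with the four 2-sets
  crossing two disjoint 2-sets, then bound the number of such pairs by
  \<open>4(k - t) \<le> (t + 2)(k - t)\<close>.\<close>

lemma card_le_product: "S \<subseteq> P \<times> Q \<Longrightarrow> finite P \<Longrightarrow> finite Q \<Longrightarrow> card S \<le> card P * card Q"
  by (metis card_cartesian_product card_mono finite_cartesian_product)

lemma card_2_eq_doubleton: "card B = 2 \<Longrightarrow> x \<in> B \<Longrightarrow> y \<in> B \<Longrightarrow> x \<noteq> y \<Longrightarrow> B = {x, y}"
  by (metis card_2_iff doubleton_eq_iff insertE singletonD)

lemma card_2_ex_other: "card B = 2 \<Longrightarrow> \<exists>c\<in>B. c \<noteq> b"
  by (metis card_2_iff')

definition doubletons :: "'a set \<Rightarrow> 'a set set" where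
  "doubletons Y = {B. B \<subseteq> Y \<and> card B = 2}"

definition intersecting :: "'a set set \<Rightarrow> bool" where
  "intersecting H \<longleftrightarrow> (\<forall>A\<in>H. \<forall>B\<in>H. A \<inter> B \<noteq> {})"

definition cross_doubletons :: "'a set \<Rightarrow> 'a set \<Rightarrow> 'a set set" where
  "cross_doubletons e f = (\<lambda>(x, y). {x, y}) ` (e \<times> f)"

lemma finite_doubletons: "finite Y \<Longrightarrow> finite (doubletons Y)"
  unfolding doubletons_def by simp

lemma card_doubletons: "finite Y \<Longrightarrow> card (doubletons Y) = card Y choose 2"
  unfolding doubletons_def by (rule n_subsets)

lemma card_Int_doubletons_le:
  assumes "card p = 2" "card p' = 2" "p \<noteq> p'"
  shows "card (p \<inter> p') \<le> 1"
proof -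
  have "finite p" using assms(1) by (intro card_ge_0_finite) simp
  moreover have "p \<inter> p' \<noteq> p"
    using assms by (metis card_subset_eq card.infinite inf.absorb_iff1 zero_neq_numeral)
  ultimately have "card (p \<inter> p') < card p" by (intro psubset_card_mono) auto
  then show ?thesis using assms(1) by simp
qed

lemma card_doubletons_containing_le:
  assumes "finite Y" "a \<in> Y"
  shows "card {B \<in> doubletons Y. a \<in> B} \<le> card Y - 1"
proof -
  have "{B \<in> doubletons Y. a \<in> B} \<subseteq> (\<lambda>y. {a, y}) ` (Y - {a})"
    by (auto simp: doubletons_def card_2_iff insert_commute)
  then have "card {B \<in> doubletons Y. a \<in> B} \<le> card ((\<lambda>y. {a, y}) ` (Y - {a}))"
    using assms(1) by (intro card_mono) auto
  also have "\<dots> \<le> card (Y - {a})" by (rule card_image_le) (use assms(1) in simp)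
  finally show ?thesis using assms by simp
qed

lemma card_doubletons_meeting_le:
  assumes "finite Y" "g \<subseteq> Y"
  shows "card {B \<in> doubletons Y. B \<inter> g \<noteq> {}} \<le> card g * (card Y - 1)"
proof -
  have fin_g: "finite g" using assms finite_subset by blast
  have "{B \<in> doubletons Y. B \<inter> g \<noteq> {}} = (\<Union>a\<in>g. {B \<in> doubletons Y. a \<in> B})" by auto
  then have "card {B \<in> doubletons Y. B \<inter> g \<noteq> {}} \<le> (\<Sum>a\<in>g. card {B \<in> doubletons Y. a \<in> B})"
    using card_UN_le[OF fin_g] by simp
  also have "\<dots> \<le> card g * (card Y - 1)"
    using sum_bounded_above[of g "\<lambda>a. card {B \<in> doubletons Y. a \<in> B}"]
      card_doubletons_containing_le[OF assms(1)] assms(2) by auto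
  finally show ?thesis .
qed

lemma doubleton_in_cross_doubletons:
  assumes "card B = 2" "e \<inter> f = {}" "B \<inter> e \<noteq> {}" "B \<inter> f \<noteq> {}"
  shows "B \<in> cross_doubletons e f"
proof -
  obtain x y where "x \<in> B \<inter> e" "y \<in> B \<inter> f" using assms(3,4) by blast
  moreover from this have "B = {x, y}"
    using assms(1,2) by (auto simp: card_2_iff)
  ultimately show ?thesis unfolding cross_doubletons_def by blast
qed

lemma finite_cross_doubletons: "finite e \<Longrightarrow> finite f \<Longrightarrow> finite (cross_doubletons e f)"
  unfolding cross_doubletons_def by simp

lemma card_cross_doubletons_le:
  "finite e \<Longrightarrow> finite f \<Longrightarrow> card (cross_doubletons e f) \<le> card e * card f"
  unfolding cross_doubletons_def by (metis card_cartesian_product card_image_le finite_cartesian_product)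

text \<open>The four cross doubletons of two disjoint doubletons form two perfect matchings, and an
  intersecting family contains at most one edge of each.\<close>
lemma card_intersecting_cross_doubletons_le:
  assumes "card e = 2" "card f = 2" "e \<inter> f = {}"
    and "H \<subseteq> cross_doubletons e f" "intersecting H"
  shows "card H \<le> 2"
proof -
  obtain a b where e: "e = {a, b}" "a \<noteq> b" using assms(1) by (auto simp: card_2_iff)
  obtain c d where f: "f = {c, d}" "c \<noteq> d" using assms(2) by (auto simp: card_2_iff)
  have distinct: "a \<noteq> c" "a \<noteq> d" "b \<noteq> c" "b \<noteq> d" using assms(3) e f by auto
  define matching where "matching B \<longleftrightarrow> (a \<in> B \<longleftrightarrow> c \<in> B)" for B
  define edges where "edges m = (if m then ({a, c}, {b, d}) else ({a, d}, {b, c}))" for m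
  have edges_disjoint: "fst (edges m) \<inter> snd (edges m) = {}" for m
    using distinct e(2) f(2) unfolding edges_def by auto
  have edge_of_matching: "B = fst (edges (matching B)) \<or> B = snd (edges (matching B))"
    if B: "B \<in> H" for B
  proof -
    obtain x y where "x \<in> e" "y \<in> f" "B = {x, y}"
      using B assms(4) unfolding cross_doubletons_def by blast
    moreover have "x = a \<or> x = b" "y = c \<or> y = d" using \<open>x \<in> e\<close> \<open>y \<in> f\<close> e f by auto
    ultimately consider "B = {a, c}" | "B = {a, d}" | "B = {b, c}" | "B = {b, d}" by auto
    then show ?thesis using distinct unfolding matching_def edges_def by cases auto
  qed
  have "inj_on matching H"
  proof (rule inj_onI)
    fix B1 B2 assume B: "B1 \<in> H" "B2 \<in> H" "matching B1 = matching B2"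
    then have "B1 \<inter> B2 \<noteq> {}" using assms(5) unfolding intersecting_def by blast
    then show "B1 = B2"
      using edge_of_matching[OF B(1)] edge_of_matching[OF B(2)] edges_disjoint B(3) by auto
  qed
  then have "card H \<le> card (UNIV :: bool set)" by (rule card_inj_on_le) auto
  then show ?thesis by simp
qed

lemma intersecting_doubletons_star_or_triangle:
  assumes "\<forall>B\<in>H. card B = 2" "intersecting H"
  obtains a where "\<forall>B\<in>H. a \<in> B" | a b c where "H \<subseteq> {{a, b}, {a, c}, {b, c}}"
proof (cases "H = {}")
  case False
  then obtain a b where ab: "{a, b} \<in> H" "a \<noteq> b" using assms(1) by (metis card_2_iff ex_in_conv)
  show ?thesis
  proof (cases "(\<forall>B\<in>H. a \<in> B) \<or> (\<forall>B\<in>H. b \<in> B)")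
    case True
    then show ?thesis using that(1) by blast
  next
    case False
    then obtain B1 B2 where B: "B1 \<in> H" "a \<notin> B1" "B2 \<in> H" "b \<notin> B2" by blast
    have meets: "B \<inter> B' \<noteq> {}" if "B \<in> H" "B' \<in> H" for B B'
      using assms(2) that unfolding intersecting_def by blast
    have "b \<in> B1" "a \<in> B2" using meets[OF B(1) ab(1)] meets[OF B(3) ab(1)] B by auto
    obtain c where c: "c \<in> B1" "c \<noteq> b" using card_2_ex_other assms(1) B(1) by metis
    have "B1 = {b, c}" using card_2_eq_doubleton assms(1) B(1) \<open>b \<in> B1\<close> c by metis
    have "B2 \<inter> B1 \<subseteq> {c}" using \<open>B1 = {b, c}\<close> B(4) by auto
    then have "c \<in> B2" using meets[OF B(3) B(1)] by auto
    have "c \<noteq> a" using c B(2) by auto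
    then have "B2 = {a, c}" using card_2_eq_doubleton assms(1) B(3) \<open>a \<in> B2\<close> \<open>c \<in> B2\<close> by metis
    have "B \<in> {{a, b}, {a, c}, {b, c}}" if "B \<in> H" for B
    proof -
      have card_B: "card B = 2" using assms(1) that by blast
      have "a \<in> B \<or> b \<in> B" "b \<in> B \<or> c \<in> B" "a \<in> B \<or> c \<in> B"
        using meets[OF that ab(1)] meets[OF that B(1)] meets[OF that B(3)]
          \<open>B1 = {b, c}\<close> \<open>B2 = {a, c}\<close> by auto
      then consider "a \<in> B" "b \<in> B" | "a \<in> B" "c \<in> B" | "b \<in> B" "c \<in> B" by blast
      then show ?thesis
        using card_2_eq_doubleton[OF card_B] ab(2) c(2) \<open>c \<noteq> a\<close> by cases auto
    qed
    then show ?thesis using that(2) by blast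
  qed
qed (use that in blast)

lemma card_intersecting_doubletons_le:
  assumes "finite Y" "card Y \<ge> 4" "H \<subseteq> doubletons Y" "intersecting H"
  shows "card H \<le> card Y - 1"
proof -
  have "\<forall>B\<in>H. card B = 2" using assms(3) unfolding doubletons_def by blast
  then show ?thesis
  proof (rule intersecting_doubletons_star_or_triangle[OF _ assms(4)])
    fix a assume star: "\<forall>B\<in>H. a \<in> B"
    show ?thesis
    proof (cases "a \<in> Y")
      case True
      have "H \<subseteq> {B \<in> doubletons Y. a \<in> B}" using star assms(3) by blast
      then have "card H \<le> card {B \<in> doubletons Y. a \<in> B}"
        using finite_doubletons[OF assms(1)] by (intro card_mono) auto
      then show ?thesis using card_doubletons_containing_le[OF assms(1) True] by linarith
    next
      case False
      then have "H = {}" using star assms(3) unfolding doubletons_def by blast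
      then show ?thesis by simp
    qed
  next
    fix a b c assume triangle: "H \<subseteq> {{a, b}, {a, c}, {b, c}}"
    have "card {{a, b}, {a, c}, {b, c}} \<le> 3" by (simp add: card_insert_if)
    then have "card H \<le> 3" using triangle by (meson card_mono finite.emptyI finite.insertI order_trans)
    then show ?thesis using assms(2) by linarith
  qed
qed

lemma card_cross_doubletons_of_doubletons_le:
  assumes "card e = 2" "card f = 2" "H \<subseteq> cross_doubletons e f"
  shows "card H \<le> 4"
proof -
  have fin: "finite e" "finite f" using assms(1,2) by (auto intro: card_ge_0_finite)
  have "card H \<le> card (cross_doubletons e f)"
    using assms(3) finite_cross_doubletons[OF fin] by (rule card_mono[rotated])
  also have "\<dots> \<le> card e * card f" by (rule card_cross_doubletons_le[OF fin])
  finally show ?thesis using assms(1,2) by simp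
qed

lemma card_cross_intersecting_doubletons_le:
  assumes "finite Y" "card Y \<ge> 5" "card e = 2" "card f = 2" "e \<inter> f = {}"
    and G0: "G0 \<subseteq> doubletons Y" and G1: "G1 \<subseteq> doubletons Y \<inter> cross_doubletons e f" "G1 \<noteq> {}"
    and cross: "\<forall>q0\<in>G0. \<forall>q1\<in>G1. q0 \<inter> q1 \<noteq> {}"
  shows "card G0 + 2 * card G1 \<le> 4 * (card Y - 2)"
proof (cases "intersecting G1")
  case True
  then have "card G1 \<le> 2"
    using card_intersecting_cross_doubletons_le assms(3-5) G1(1) by blast
  obtain q where q: "q \<in> G1" using G1(2) by blast
  then have q_Y: "q \<subseteq> Y" "card q = 2" using G1(1) unfolding doubletons_def by auto
  have "G0 \<subseteq> {B \<in> doubletons Y. B \<inter> q \<noteq> {}}" using G0 cross q by blast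
  then have "card G0 \<le> card {B \<in> doubletons Y. B \<inter> q \<noteq> {}}"
    using finite_doubletons[OF assms(1)] by (intro card_mono) auto
  also have "\<dots> \<le> 2 * (card Y - 1)"
    using card_doubletons_meeting_le[OF assms(1) q_Y(1)] q_Y(2) by simp
  finally show ?thesis using \<open>card G1 \<le> 2\<close> assms(2) by linarith
next
  case False
  then obtain q3 q4 where q34: "q3 \<in> G1" "q4 \<in> G1" "q3 \<inter> q4 = {}"
    unfolding intersecting_def by blast
  have card_q34: "card q3 = 2" "card q4 = 2" using q34 G1(1) unfolding doubletons_def by auto
  have "G0 \<subseteq> cross_doubletons q3 q4"
  proof
    fix B assume "B \<in> G0"
    then show "B \<in> cross_doubletons q3 q4"
      using doubleton_in_cross_doubletons[OF _ q34(3)] G0 cross q34(1,2)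
      unfolding doubletons_def by auto
  qed
  then have "card G0 \<le> 4" by (rule card_cross_doubletons_of_doubletons_le[OF card_q34])
  moreover have "card G1 \<le> 4"
    using G1(1) by (intro card_cross_doubletons_of_doubletons_le[OF assms(3,4)]) auto
  ultimately show ?thesis using assms(2) by linarith
qed

lemma card_le_by_fibre:
  assumes "R \<subseteq> A \<times> B" "finite A" "finite B" "a0 \<in> A"
  shows "card R \<le> card (snd ` {r \<in> R. fst r = a0}) + (card A - 1) * card (snd ` {r \<in> R. fst r \<noteq> a0})"
proof -
  define R0 where "R0 = {r \<in> R. fst r = a0}"
  define R1 where "R1 = {r \<in> R. fst r \<noteq> a0}"
  have "snd ` R \<subseteq> B" using assms(1) by auto
  then have fin: "finite (snd ` R0)" "finite (snd ` R1)"
    unfolding R0_def R1_def using assms(3) by (auto intro: finite_subset)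
  have "R0 \<subseteq> {a0} \<times> snd ` R0" unfolding R0_def by force
  then have "card R0 \<le> card {a0} * card (snd ` R0)" using fin(1) by (intro card_le_product) auto
  moreover have "R1 \<subseteq> (A - {a0}) \<times> snd ` R1" using assms(1) unfolding R1_def by force
  then have "card R1 \<le> card (A - {a0}) * card (snd ` R1)"
    using fin(2) assms(2) by (intro card_le_product) auto
  moreover have "R = R0 \<union> R1" unfolding R0_def R1_def by auto
  then have "card R \<le> card R0 + card R1" by (metis card_Un_le)
  moreover have "card (A - {a0}) = card A - 1" using assms(2,4) by simp
  ultimately show ?thesis unfolding R0_def R1_def by simp
qed

text \<open>Either the doubletons form an intersecting family, which has at most \<open>|Y| - 1\<close> members,
  or two disjoint ones \<open>e\<close>, \<open>f\<close> carry the same colour \<open>a\<^sub>0\<close>, and then every doubleton of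
  another colour crosses \<open>e\<close> and \<open>f\<close>.\<close>
lemma card_cross_intersecting_colouring_le:
  fixes R :: "('c \<times> 'a set) set"
  assumes "finite A" "card A \<le> 3" "finite Y" "card Y \<ge> 5"
    and R: "R \<subseteq> A \<times> doubletons Y"
    and cross: "\<And>p q p' q'. (p, q) \<in> R \<Longrightarrow> (p', q') \<in> R \<Longrightarrow> p \<noteq> p' \<Longrightarrow> q \<inter> q' \<noteq> {}"
    and two_colours: "(p1, q1) \<in> R" "(p2, q2) \<in> R" "p1 \<noteq> p2"
  shows "card R \<le> 4 * (card Y - 2)"
proof (cases "intersecting (snd ` R)")
  case True
  have snd_R: "snd ` R \<subseteq> doubletons Y" using R by auto
  then have "card (snd ` R) \<le> card Y - 1"
    using card_intersecting_doubletons_le[OF assms(3) _ _ True] assms(4) by simp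
  moreover have "card R \<le> card A * card (snd ` R)"
    using R assms(1) finite_subset[OF snd_R finite_doubletons[OF assms(3)]]
    by (intro card_le_product) force+
  ultimately have "card R \<le> 3 * (card Y - 1)"
    using assms(2) by (meson le_trans mult_le_mono)
  then show ?thesis using assms(4) by linarith
next
  case False
  then obtain a0 e a0' f where ef: "(a0, e) \<in> R" "(a0', f) \<in> R" "e \<inter> f = {}"
    unfolding intersecting_def by auto
  then have "a0' = a0" using cross by blast
  define R0 where "R0 = {r \<in> R. fst r = a0}"
  define R1 where "R1 = {r \<in> R. fst r \<noteq> a0}"
  have card_ef: "card e = 2" "card f = 2" using ef R unfolding doubletons_def by auto
  have "snd ` R0 \<subseteq> doubletons Y" using R unfolding R0_def by auto
  moreover have "snd ` R1 \<subseteq> doubletons Y \<inter> cross_doubletons e f"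
  proof
    fix q assume "q \<in> snd ` R1"
    then obtain p where "(p, q) \<in> R1" by auto
    then have "(p, q) \<in> R" "p \<noteq> a0" unfolding R1_def by auto
    moreover from this have "q \<inter> e \<noteq> {}" "q \<inter> f \<noteq> {}"
      using cross ef(1,2) \<open>a0' = a0\<close> by blast+
    moreover have "q \<in> doubletons Y" using \<open>(p, q) \<in> R\<close> R by blast
    ultimately show "q \<in> doubletons Y \<inter> cross_doubletons e f"
      using doubleton_in_cross_doubletons[OF _ ef(3)] unfolding doubletons_def by blast
  qed
  moreover have "snd ` R1 \<noteq> {}"
  proof -
    obtain p q where "(p, q) \<in> R" "p \<noteq> a0" using two_colours by blast
    then have "(p, q) \<in> R1" unfolding R1_def by simp
    then show ?thesis by blast
  qed
  moreover have "\<forall>q0\<in>snd ` R0. \<forall>q1\<in>snd ` R1. q0 \<inter> q1 \<noteq> {}"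
  proof (intro ballI)
    fix q0 q1 assume "q0 \<in> snd ` R0" "q1 \<in> snd ` R1"
    then obtain p0 p1' where "(p0, q0) \<in> R0" "(p1', q1) \<in> R1" by auto
    then show "q0 \<inter> q1 \<noteq> {}" using cross unfolding R0_def R1_def by auto
  qed
  ultimately have "card (snd ` R0) + 2 * card (snd ` R1) \<le> 4 * (card Y - 2)"
    by (rule card_cross_intersecting_doubletons_le[OF assms(3,4) card_ef ef(3)])
  moreover have "a0 \<in> A" using ef(1) R by blast
  then have "card R \<le> card (snd ` R0) + (card A - 1) * card (snd ` R1)"
    unfolding R0_def R1_def by (rule card_le_by_fibre[OF R assms(1) finite_doubletons[OF assms(3)]])
  moreover have "(card A - 1) * card (snd ` R1) \<le> 2 * card (snd ` R1)"
    using assms(2) by (intro mult_le_mono1) linarith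
  ultimately show ?thesis by linarith
qed

lemma tight_set_split:
  assumes "finite T" "finite U" "card T = t + 2" "2 \<le> t" "card (U \<inter> F) \<le> t - 2"
    and "t \<le> card (T \<inter> U)" "t \<le> card (T \<inter> F)"
  shows "U \<inter> F \<subseteq> T" "T \<subseteq> U \<union> F" "card (U \<inter> F) = t - 2"
    and "card (T \<inter> (U - F)) = 2" "card (T \<inter> (F - U)) = 2"
proof -
  have fin: "finite (U \<inter> F)" using assms(2) by simp
  have sum: "card (T \<inter> U) + card (T \<inter> F) = card (T \<inter> (U \<union> F)) + card (T \<inter> (U \<inter> F))"
    using card_Un_Int[of "T \<inter> U" "T \<inter> F"] assms(1) by (simp add: Int_Un_distrib Int_ac)
  have le1: "card (T \<inter> (U \<union> F)) \<le> card T" using assms(1) by (intro card_mono) auto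
  have le2: "card (T \<inter> (U \<inter> F)) \<le> card (U \<inter> F)" using fin by (intro card_mono) auto
  have "card (T \<inter> (U \<union> F)) = card T" using sum le1 le2 assms(3-7) by linarith
  then have "T \<inter> (U \<union> F) = T" using card_subset_eq[OF assms(1) Int_lower1] by blast
  then show "T \<subseteq> U \<union> F" by blast
  have "card (T \<inter> (U \<inter> F)) = card (U \<inter> F)" using sum le1 le2 assms(3-7) by linarith
  then have "T \<inter> (U \<inter> F) = U \<inter> F" using card_subset_eq[OF fin Int_lower2] by blast
  then show UF_T: "U \<inter> F \<subseteq> T" by blast
  show card_UF: "card (U \<inter> F) = t - 2" using sum le1 le2 assms(3-7) by linarith
  have "card (T \<inter> U) = t" "card (T \<inter> F) = t" using sum le1 le2 assms(3-7) by linarith+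
  moreover have "card (A - U \<inter> F) = card A - card (U \<inter> F)" if "U \<inter> F \<subseteq> A" for A
    using card_Diff_subset[OF fin that] .
  moreover have "T \<inter> (U - F) = (T \<inter> U) - (U \<inter> F)" "T \<inter> (F - U) = (T \<inter> F) - (U \<inter> F)"
    "U \<inter> F \<subseteq> T \<inter> U" "U \<inter> F \<subseteq> T \<inter> F" using UF_T by auto
  ultimately show "card (T \<inter> (U - F)) = 2" "card (T \<inter> (F - U)) = 2"
    using card_UF assms(4) by auto
qed

text \<open>The configuration of the theorem: \<open>\<T>\<close> stands for \<open>\<T>\<^sub>t(\<F>)\<close>, \<open>U\<close> for a member of
  \<open>\<U>\<^sub>t(\<F>)\<close> and \<open>F\<close> for a member of \<open>\<F>\<close>.\<close>
locale tight_covers =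
  fixes t k :: nat and U F :: "'a set" and \<T> :: "'a set set"
  assumes finite_U: "finite U" and finite_F: "finite F"
    and card_U: "card U = t + 1" and card_F: "card F = k" and card_UF: "card (U \<inter> F) \<le> t - 2"
    and t_ge: "2 \<le> t" and k_ge: "t + 3 \<le> k"
    and card_member: "T \<in> \<T> \<Longrightarrow> card T = t + 2"
    and member_meets_U: "T \<in> \<T> \<Longrightarrow> t \<le> card (T \<inter> U)"
    and member_meets_F: "T \<in> \<T> \<Longrightarrow> t \<le> card (T \<inter> F)"
    and pairwise_t_intersect: "T \<in> \<T> \<Longrightarrow> T' \<in> \<T> \<Longrightarrow> t \<le> card (T \<inter> T')"
    and no_small_cover: "S \<subseteq> U \<Longrightarrow> card S = t \<Longrightarrow> \<exists>T\<in>\<T>. card (S \<inter> T) < t"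
begin

lemma member_split:
  assumes "T \<in> \<T>"
  shows "U \<inter> F \<subseteq> T" "T \<subseteq> U \<union> F" "card (U \<inter> F) = t - 2"
    and "card (T \<inter> (U - F)) = 2" "card (T \<inter> (F - U)) = 2"
proof -
  have "finite T" using card_member[OF assms] by (intro card_ge_0_finite) simp
  then show "U \<inter> F \<subseteq> T" "T \<subseteq> U \<union> F" "card (U \<inter> F) = t - 2"
    "card (T \<inter> (U - F)) = 2" "card (T \<inter> (F - U)) = 2"
    by (rule tight_set_split[OF _ finite_U card_member[OF assms] t_ge card_UF
          member_meets_U[OF assms] member_meets_F[OF assms]])+
qed

lemma nonempty: "\<T> \<noteq> {}"
proof -
  obtain S where "S \<subseteq> U" "card S = t" using obtain_subset_with_card_n[of t U] card_U by auto
  then show ?thesis using no_small_cover by blast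
qed

lemma card_core: "card (U \<inter> F) = t - 2"
  using nonempty member_split(3) by blast

lemma cross_intersecting:
  assumes "T \<in> \<T>" "T' \<in> \<T>" "T \<inter> (U - F) \<noteq> T' \<inter> (U - F)"
  shows "(T \<inter> (F - U)) \<inter> (T' \<inter> (F - U)) \<noteq> {}"
proof
  assume disjoint: "(T \<inter> (F - U)) \<inter> (T' \<inter> (F - U)) = {}"
  let ?common = "(T \<inter> (U - F)) \<inter> (T' \<inter> (U - F))"
  have "T \<inter> T' \<subseteq> (U \<inter> F) \<union> ?common"
    using member_split(2)[OF assms(1)] disjoint by blast
  then have "card (T \<inter> T') \<le> card ((U \<inter> F) \<union> ?common)"
    using finite_U by (intro card_mono) auto
  also have "\<dots> \<le> card (U \<inter> F) + card ?common" by (rule card_Un_le)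
  also have "card ?common \<le> 1"
    by (rule card_Int_doubletons_le[OF member_split(4)[OF assms(1)] member_split(4)[OF assms(2)] assms(3)])
  finally have "card (T \<inter> T') < t" using card_core t_ge by linarith
  then show False using pairwise_t_intersect[OF assms(1,2)] by linarith
qed

text \<open>If all members had the same trace on \<open>U - F\<close>, this trace together with \<open>U \<inter> F\<close>
  would be a \<open>t\<close>-subset of \<open>U\<close> contained in every member.\<close>
lemma two_traces: "\<exists>T\<in>\<T>. \<exists>T'\<in>\<T>. T \<inter> (U - F) \<noteq> T' \<inter> (U - F)"
proof (rule ccontr)
  assume "\<not> ?thesis"
  then obtain p where p: "\<And>T. T \<in> \<T> \<Longrightarrow> T \<inter> (U - F) = p" using nonempty by blast
  obtain T0 where T0: "T0 \<in> \<T>" using nonempty by blast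
  let ?S = "U \<inter> F \<union> p"
  have "card ?S = card (U \<inter> F) + card p"
    using finite_U p[OF T0] by (intro card_Un_disjoint) auto
  then have "card ?S = t"
    using card_core member_split(4)[OF T0] p[OF T0] t_ge by simp
  moreover have "?S \<subseteq> U" using p[OF T0] by blast
  ultimately obtain T where T: "T \<in> \<T>" "card (?S \<inter> T) < t" using no_small_cover by blast
  moreover have "?S \<inter> T = ?S" using member_split(1)[OF T(1)] p[OF T(1)] by blast
  ultimately show False using \<open>card ?S = t\<close> by simp
qed

lemma card_set_differences: "card (U - F) = 3" "card (F - U) = k - t + 2"
proof -
  have "card (U - (U \<inter> F)) = card U - card (U \<inter> F)"
    "card (F - (U \<inter> F)) = card F - card (U \<inter> F)"
    using finite_U by (auto intro: card_Diff_subset)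
  moreover have "U - (U \<inter> F) = U - F" "F - (U \<inter> F) = F - U" by blast+
  ultimately show "card (U - F) = 3" "card (F - U) = k - t + 2"
    using card_U card_F card_core t_ge k_ge by simp_all
qed

theorem card_le: "card \<T> \<le> 4 * (k - t)"
proof -
  define trace where "trace T = (T \<inter> (U - F), T \<inter> (F - U))" for T
  define R where "R = trace ` \<T>"
  have "inj_on trace \<T>"
  proof (rule inj_onI)
    fix T T' assume T: "T \<in> \<T>" "T' \<in> \<T>" "trace T = trace T'"
    have "T = U \<inter> F \<union> (T \<inter> (U - F)) \<union> (T \<inter> (F - U))" using member_split(1,2)[OF T(1)] by blast
    also have "\<dots> = U \<inter> F \<union> (T' \<inter> (U - F)) \<union> (T' \<inter> (F - U))" using T(3) by (simp add: trace_def)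
    also have "\<dots> = T'" using member_split(1,2)[OF T(2)] by blast
    finally show "T = T'" .
  qed
  then have card_R: "card \<T> = card R" unfolding R_def by (simp add: card_image)
  have R_sub: "R \<subseteq> doubletons (U - F) \<times> doubletons (F - U)"
    unfolding R_def trace_def doubletons_def using member_split(4,5) by auto
  obtain T T' where TT': "T \<in> \<T>" "T' \<in> \<T>" "T \<inter> (U - F) \<noteq> T' \<inter> (U - F)"
    using two_traces by blast
  then have traces: "(T \<inter> (U - F), T \<inter> (F - U)) \<in> R" "(T' \<inter> (U - F), T' \<inter> (F - U)) \<in> R"
    unfolding R_def trace_def by auto
  have fin_X: "finite (U - F)" and fin_Y: "finite (F - U)" using finite_U finite_F by simp_all
  have card_D: "card (doubletons (U - F)) \<le> 3"
    using card_doubletons[OF fin_X] card_set_differences(1) by (simp add: choose_two)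
  have card_Y: "card (F - U) \<ge> 5" using card_set_differences(2) k_ge by simp
  have "card R \<le> 4 * (card (F - U) - 2)"
  proof (rule card_cross_intersecting_colouring_le[OF finite_doubletons[OF fin_X] card_D fin_Y card_Y
        R_sub _ traces TT'(3)])
    fix p q p' q' assume "(p, q) \<in> R" "(p', q') \<in> R" "p \<noteq> p'"
    then obtain S S' where "S \<in> \<T>" "S' \<in> \<T>" "(p, q) = trace S" "(p', q') = trace S'"
      unfolding R_def by blast
    then show "q \<inter> q' \<noteq> {}" using cross_intersecting \<open>p \<noteq> p'\<close> by (simp add: trace_def)
  qed
  then show ?thesis using card_R card_set_differences(2) by simp
qed

end

lemma tau_t_le_card: "is_t_cover n t \<G> S \<Longrightarrow> tau_t n t \<G> \<le> card S"
  unfolding tau_t_def by (rule Least_le) blast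

lemma maximal_t_intersecting_cover_mem:
  assumes max: "maximal_t_intersecting n k t \<F>" and "t \<le> k"
    and G: "G \<in> k_subsets n k" "is_t_cover n t \<F> G"
  shows "G \<in> \<F>"
proof (rule ccontr)
  assume "G \<notin> \<F>"
  have F_int: "t_intersecting t \<F>" and F_k: "\<F> \<subseteq> k_subsets n k"
    using max unfolding maximal_t_intersecting_def by auto
  have G_G: "t \<le> card (G \<inter> G)" using G(1) \<open>t \<le> k\<close> unfolding k_subsets_def by simp
  have G_F: "t \<le> card (G \<inter> A)" "t \<le> card (A \<inter> G)" if "A \<in> \<F>" for A
    using G(2) that unfolding is_t_cover_def by (auto simp: Int_commute)
  have "t_intersecting t (insert G \<F>)"
    using F_int G_G G_F unfolding t_intersecting_def by blast
  moreover have "\<F> \<subset> insert G \<F>" "insert G \<F> \<subseteq> k_subsets n k"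
    using \<open>G \<notin> \<F>\<close> F_k G(1) by auto
  ultimately show False using max unfolding maximal_t_intersecting_def by blast
qed

text \<open>Pad \<open>S'\<close> with \<open>k - |S'|\<close> points outside \<open>S \<union> S'\<close>: by maximality the result belongs
  to \<open>\<F>\<close>, so the \<open>t\<close>-cover \<open>S\<close> meets it, i.e.\ meets \<open>S'\<close>, in \<open>t\<close> points.\<close>
lemma maximal_t_intersecting_covers_t_intersect:
  assumes max: "maximal_t_intersecting n k t \<F>" and "t \<le> k"
    and S: "is_t_cover n t \<F> S" and S': "is_t_cover n t \<F> S'" "card S' \<le> k"
    and n: "card S + k \<le> n"
  shows "t \<le> card (S \<inter> S')"
proof -
  have fin: "finite S" "finite S'" using S S' unfolding is_t_cover_def by (auto intro: finite_subset)
  have "card {1..n} - card (S \<union> S') \<le> card ({1..n} - (S \<union> S'))"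
    by (rule diff_card_le_card_Diff) (use fin in simp)
  moreover have "card (S \<union> S') \<le> card S + card S'" by (rule card_Un_le)
  ultimately have "k - card S' \<le> card ({1..n} - (S \<union> S'))" using n by simp
  then obtain W where W: "W \<subseteq> {1..n} - (S \<union> S')" "card W = k - card S'"
    using obtain_subset_with_card_n by metis
  define G where "G = S' \<union> W"
  have fin_W: "finite W" using W(1) by (rule finite_subset) simp
  have "card G = k" unfolding G_def using card_Un_disjoint[OF fin(2) fin_W] W S'(2) by auto
  moreover have "G \<subseteq> {1..n}" unfolding G_def using W(1) S' unfolding is_t_cover_def by auto
  moreover have "t \<le> card (G \<inter> H)" if "H \<in> \<F>" for H
  proof -
    have "card (S' \<inter> H) \<le> card (G \<inter> H)" using fin(2) fin_W unfolding G_def by (intro card_mono) auto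
    then show ?thesis using S' that unfolding is_t_cover_def by fastforce
  qed
  ultimately have "G \<in> \<F>"
    using maximal_t_intersecting_cover_mem[OF max \<open>t \<le> k\<close>]
    unfolding k_subsets_def is_t_cover_def by blast
  then have "t \<le> card (S \<inter> G)" using S unfolding is_t_cover_def by blast
  moreover have "S \<inter> G = S \<inter> S'" unfolding G_def using W(1) by auto
  ultimately show ?thesis by simp
qed

lemma tight_covers_T_t:
  fixes \<F> :: "nat set set"
  assumes "2 * k < n" "t + 3 \<le> k" "2 \<le> t" and max: "maximal_t_intersecting n k t \<F>"
    and tau_F: "tau_t n t \<F> = t + 2" and tau_T: "tau_t n t (T_t n t \<F>) = t + 1"
    and U: "U \<in> U_t n t \<F>" and F: "F \<in> \<F>" and UF: "card (U \<inter> F) \<le> t - 2"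
  shows "tight_covers t k U F (T_t n t \<F>)"
proof -
  have F_k: "F \<subseteq> {1..n}" "card F = k"
    using F max unfolding maximal_t_intersecting_def k_subsets_def by auto
  have U_cover: "is_t_cover n t (T_t n t \<F>) U" "card U = t + 1"
    using U tau_T unfolding U_t_def T_t_def by auto
  have T_cover: "is_t_cover n t \<F> T" "card T = t + 2" if "T \<in> T_t n t \<F>" for T
    using that tau_F unfolding T_t_def by auto
  show ?thesis
  proof
    show "finite U" "finite F"
      using U_cover(1) F_k(1) unfolding is_t_cover_def by (auto intro: finite_subset)
    show "t \<le> card (T \<inter> U)" if "T \<in> T_t n t \<F>" for T
      using U_cover(1) that unfolding is_t_cover_def by (simp add: Int_commute)
    show "t \<le> card (T \<inter> F)" if "T \<in> T_t n t \<F>" for T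
      using T_cover(1)[OF that] F unfolding is_t_cover_def by blast
    show "t \<le> card (T \<inter> T')" if "T \<in> T_t n t \<F>" "T' \<in> T_t n t \<F>" for T T'
      using maximal_t_intersecting_covers_t_intersect[OF max _ T_cover(1)[OF that(1)]
          T_cover(1)[OF that(2)]] T_cover(2)[OF that(1)] T_cover(2)[OF that(2)] assms(1-3) by simp
    show "\<exists>T\<in>T_t n t \<F>. card (S \<inter> T) < t" if "S \<subseteq> U" "card S = t" for S
    proof (rule ccontr)
      assume "\<not> ?thesis"
      then have "is_t_cover n t (T_t n t \<F>) S"
        using that(1) U_cover(1) unfolding is_t_cover_def by (auto simp: not_less)
      then show False using tau_t_le_card that(2) tau_T by fastforce
    qed
  qed (use U_cover(2) F_k(2) UF assms(2,3) T_cover(2) in auto)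
qed

theorem lemma2p6:
  fixes n k t :: nat and \<F> :: "nat set set"
  assumes "n > 2 * k" and "k \<ge> t + 3" and "t \<ge> 2"
    and "maximal_t_intersecting n k t \<F>"
    and "tau_t n t \<F> = t + 2"
    and "tau_t n t (T_t n t \<F>) = t + 1"
    and "\<exists>U\<in>U_t n t \<F>. \<exists>F\<in>\<F>. card (U \<inter> F) \<le> t - 2"
  shows "card (T_t n t \<F>) < (t + 2) * (k - t) + 1"
proof -
  obtain U F where "U \<in> U_t n t \<F>" "F \<in> \<F>" "card (U \<inter> F) \<le> t - 2"
    using assms(7) by blast
  then have "tight_covers t k U F (T_t n t \<F>)"
    by (rule tight_covers_T_t[OF assms(1-6)])
  then have "card (T_t n t \<F>) \<le> 4 * (k - t)" by (rule tight_covers.card_le)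
  also have "\<dots> \<le> (t + 2) * (k - t)" using assms(3) by simp
  finally show ?thesis by linarith
qed

end
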